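(* In the D-LORD setting of the context, suppose the null $p$-values are conditionally uniformly conservative and $\tau_j\ge\alpha_j$ (with $\tau_j>0$) for each $j\in\mathbb N$. (a) Any procedure with $\widehat{\mathrm{FDP}}_{\mathrm{D\text{-}LORD}}(t)\le\alpha$ for all $t\in\mathbb N$ satisfies $\mathrm{mFDR}(t)\le\alpha$ for all $t\in\mathbb N$. (b) If moreover the null $p$-values are independent of each other and of the non-nulls, and for all $t$ both $\alpha_t$ and $1-\tau_t$ are monotonic functions of the past, then any procedure with $\widehat{\mathrm{FDP}}_{\mathrm{D\text{-}LORD}}(t)\le\alpha$ for all $t$ satisfies $\mathrm{FDR}(t)\le\alpha$ for all $t\in\mathbb N$.
   Context: Let $P_1,P_2,\dots$ be $p$-values for hypotheses $H_1,H_2,\dots$, $\mathcal H_0\subseteq\mathbb N$ the set of true null indices, $\alpha\in(0,1)$. Sequences $\{\alpha_j\},\{\tau_j\}$ in $[0,1]$ define $S_j=\mathbf 1\{P_j\le\tau_j\}$, $R_j=\mathbf 1\{P_j\le\alpha_j\}$, $R(t)=\{j\le t:R_j=1\}$. Filtration $\mathcal F^{t}=\sigma(R_{1:t},S_{1:t})$, $\mathcal F^0$ trivial; $\alpha_t,\tau_t$ are $\mathcal F^{t-1}$-measurable (deterministic functions of $(R_{1:t-1},S_{1:t-1})$). Such a function is a monotonic function of the past if it is coordinatewise nondecreasing in each $R_j$ and coordinatewise nonincreasing in each $S_j$. Null $p$-values are conditionally uniformly conservative if for every $t\in\mathcal H_0$ and all $x,\tau\in(0,1)$, $\Pr(P_t/\tau\le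 x\mid P_t\le\tau,\mathcal F^{t-1})\le x$. Define $\widehat{\mathrm{FDP}}_{\mathrm{D\text{-}LORD}}(t)=\big(\sum_{j\le t}\frac{\alpha_j}{\tau_j}\mathbf 1\{P_j\le\tau_j\}\big)/(|R(t)|\vee1)$, $\mathrm{FDR}(t)=\mathbb E[|\mathcal H_0\cap R(t)|/(|R(t)|\vee1)]$, $\mathrm{mFDR}(t)=\mathbb E[|\mathcal H_0\cap R(t)|]/\mathbb E[|R(t)|\vee1]$. *)

theory Defs
  imports "HOL-Probability.Probability"
begin

text \<open>A history is the list of pairs (R_j, S_j) for j = 1, ..., t-1 (position j-1 holds index j).
  The test levels are given by rules A, T mapping a history to alpha_t, tau_t
  (deterministic functions of the past). p is the sequence of p-values (index 0 unused).\<close>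

type_synonym history = "(bool \<times> bool) list"

fun hist :: "(history \<Rightarrow> real) \<Rightarrow> (history \<Rightarrow> real) \<Rightarrow> (nat \<Rightarrow> real) \<Rightarrow> nat \<Rightarrow> history" where
  "hist A T p 0 = []"
| "hist A T p (Suc n) = hist A T p n @ [(p (Suc n) \<le> A (hist A T p n), p (Suc n) \<le> T (hist A T p n))]"

definition alpha_seq :: "(history \<Rightarrow> real) \<Rightarrow> (history \<Rightarrow> real) \<Rightarrow> (nat \<Rightarrow> real) \<Rightarrow> nat \<Rightarrow> real" where
  "alpha_seq A T p t = A (hist A T p (t - 1))"

definition tau_seq :: "(history \<Rightarrow> real) \<Rightarrow> (history \<Rightarrow> real) \<Rightarrow> (nat \<Rightarrow> real) \<Rightarrow> nat \<Rightarrow> real" where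
  "tau_seq A T p t = T (hist A T p (t - 1))"

definition rej_set :: "(history \<Rightarrow> real) \<Rightarrow> (history \<Rightarrow> real) \<Rightarrow> (nat \<Rightarrow> real) \<Rightarrow> nat \<Rightarrow> nat set" where
  "rej_set A T p t = {j \<in> {1..t}. p j \<le> alpha_seq A T p j}"

definition fdp_hat :: "(history \<Rightarrow> real) \<Rightarrow> (history \<Rightarrow> real) \<Rightarrow> (nat \<Rightarrow> real) \<Rightarrow> nat \<Rightarrow> real" where
  "fdp_hat A T p t =
     (\<Sum>j\<in>{1..t}. alpha_seq A T p j / tau_seq A T p j * (if p j \<le> tau_seq A T p j then 1 else 0))
     / max (real (card (rej_set A T p t))) 1"

definition mono_past :: "(history \<Rightarrow> real) \<Rightarrow> bool" where
  "mono_past f \<longleftrightarrow> (\<forall>h h'. length h = length h' \<longrightarrow>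
      (\<forall>i < length h. fst (h ! i) \<le> fst (h' ! i) \<and> snd (h' ! i) \<le> snd (h ! i)) \<longrightarrow> f h \<le> f h')"

end

theory Submission
  imports Defs
begin

text \<open>
  (a) By linearity, the expected number of false rejections is the sum over the nulls j of
  the probabilities of P_j \<le> \<alpha>_j. Given the past (one of finitely many histories), the levels
  \<alpha>_j \<le> \<tau>_j are fixed and conditional uniform conservativeness bounds this probability by
  \<alpha>_j/\<tau>_j times that of P_j \<le> \<tau>_j, i.e. by the expectation of the j-th summand of the
  numerator of the estimated FDP. Summing over j bounds the expected number of false rejections
  by E[FDP_hat(t) (|R(t)| \<or> 1)] \<le> \<alpha> E[|R(t)| \<or> 1].

  (b) Fix a null j \<le> t and replace P_j by -1, which forces R_j = S_j = 1; the resulting history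
  V is a function of the other p-values, hence independent of P_j. On R_j = 1 the actual history
  is V, and on S_j = 1 the monotonicity of the levels gives |R(t)| \<le> |R_V(t)|. Averaging over V
  therefore bounds E[R_j / (|R(t)| \<or> 1)] by E[\<alpha>_j/\<tau>_j S_j / (|R(t)| \<or> 1)], and summing over j
  gives FDR(t) \<le> E[FDP_hat(t)] \<le> \<alpha>.
\<close>

lemma hist_length [simp]: "length (hist A T p n) = n"
  by (induction n) auto

lemma take_hist: "k \<le> n \<Longrightarrow> take k (hist A T p n) = hist A T p k"
  by (induction n) (auto simp: le_Suc_eq)

lemma hist_nth:
  assumes "1 \<le> j" "j \<le> n"
  shows "hist A T p n ! (j - 1) = (p j \<le> A (hist A T p (j - 1)), p j \<le> T (hist A T p (j - 1)))"
proof -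
  obtain m where m: "j = Suc m" using assms by (cases j) auto
  have "hist A T p n ! (j - 1) = take j (hist A T p n) ! (j - 1)" using m by simp
  also have "\<dots> = hist A T p j ! (j - 1)" using assms by (simp add: take_hist)
  finally show ?thesis using m by (simp add: nth_append)
qed

lemma hist_cong: "(\<And>i. 1 \<le> i \<Longrightarrow> i \<le> n \<Longrightarrow> p i = q i) \<Longrightarrow> hist A T p n = hist A T q n"
  by (induction n) auto

definition rejections :: "history \<Rightarrow> nat set" where
  "rejections h = {k \<in> {1..length h}. fst (h ! (k - 1))}"

lemma rej_set_eq_rejections: "rej_set A T p t = rejections (hist A T p t)"
  unfolding rej_set_def rejections_def alpha_seq_def using hist_nth[of _ t A T p] by auto

lemma finite_histories: "finite {h :: history. length h = n}"
  using finite_lists_length_eq[of "UNIV :: (bool \<times> bool) set" n] by simp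

lemma hist_measurable:
  assumes "\<And>i. (\<lambda>x. f x i) \<in> borel_measurable N"
  shows "(\<lambda>x. hist A T (f x) n) \<in> N \<rightarrow>\<^sub>M count_space UNIV"
proof (induction n)
  case (Suc n)
  have "(\<lambda>x. (\<lambda>h x. h @ [(f x (Suc n) \<le> A h, f x (Suc n) \<le> T h)]) (hist A T (f x) n) x)
      \<in> N \<rightarrow>\<^sub>M count_space UNIV"
  proof (rule measurable_compose_countable'[OF _ Suc])
    fix h :: history
    have "(\<lambda>x. (f x (Suc n) \<le> A h, f x (Suc n) \<le> T h)) \<in> N \<rightarrow>\<^sub>M count_space UNIV"
      using assms by measurable
    then show "(\<lambda>x. h @ [(f x (Suc n) \<le> A h, f x (Suc n) \<le> T h)]) \<in> N \<rightarrow>\<^sub>M count_space UNIV"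
      by (rule measurable_compose[where N="count_space UNIV"]) simp
  qed simp
  then show ?case by simp
qed simp

lemma hist_eq_before:
  "(\<And>i. i \<noteq> j \<Longrightarrow> q i = p i) \<Longrightarrow> hist A T q (j - 1) = hist A T p (j - 1)"
  by (rule hist_cong) auto

lemma hist_eq_if_rejected_and_selected:
  assumes agree: "\<And>i. i \<noteq> j \<Longrightarrow> q i = p i"
    and "p j \<le> A (hist A T p (j - 1))" "p j \<le> T (hist A T p (j - 1))"
    and "q j \<le> A (hist A T p (j - 1))" "q j \<le> T (hist A T p (j - 1))"
  shows "hist A T q n = hist A T p n"
proof (induction n)
  case (Suc n)
  then show ?case
    using assms hist_eq_before[of j q p A T, OF agree] by (cases "Suc n = j") auto
qed simp

definition hist_le :: "history \<Rightarrow> history \<Rightarrow> bool" where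
  "hist_le h h' \<longleftrightarrow> length h = length h' \<and>
     (\<forall>i < length h. fst (h ! i) \<le> fst (h' ! i) \<and> snd (h' ! i) \<le> snd (h ! i))"

lemma mono_pastD: "mono_past f \<Longrightarrow> hist_le h h' \<Longrightarrow> f h \<le> f h'"
  unfolding mono_past_def hist_le_def by blast

lemma rejections_mono: "hist_le h h' \<Longrightarrow> rejections h \<subseteq> rejections h'"
  unfolding hist_le_def rejections_def by (auto simp: le_bool_def)

lemma hist_le_if_rejected:
  assumes "mono_past A" "mono_past (\<lambda>h. 1 - T h)"
    and agree: "\<And>i. i \<noteq> j \<Longrightarrow> q i = p i"
    and "q j \<le> A (hist A T p (j - 1))" "p j \<le> T (hist A T p (j - 1))"
  shows "hist_le (hist A T p n) (hist A T q n)"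
proof (induction n)
  case 0
  show ?case by (simp add: hist_le_def)
next
  case (Suc n)
  let ?h = "hist A T p n" and ?h' = "hist A T q n"
  have "A ?h \<le> A ?h'" "1 - T ?h \<le> 1 - T ?h'"
    using mono_pastD[OF assms(1) Suc] mono_pastD[OF assms(2) Suc] by simp_all
  then have "(p (Suc n) \<le> A ?h \<longrightarrow> q (Suc n) \<le> A ?h') \<and> (q (Suc n) \<le> T ?h' \<longrightarrow> p (Suc n) \<le> T ?h)"
    using assms(4,5) hist_eq_before[of j q p A T, OF agree] agree[of "Suc n"]
    by (cases "Suc n = j") auto
  with Suc show ?case
    by (auto simp: hist_le_def nth_append le_bool_def less_Suc_eq)
qed

lemma (in prob_space) prob_le_scaled_if_cond_superuniform:
  assumes superuniform: "\<And>x \<tau>. 0 < x \<Longrightarrow> x < 1 \<Longrightarrow> 0 < \<tau> \<Longrightarrow> \<tau> < 1 \<Longrightarrow>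
      prob {\<omega> \<in> space M. X \<omega> / \<tau> \<le> x \<and> X \<omega> \<le> \<tau> \<and> W \<omega>}
      \<le> x * prob {\<omega> \<in> space M. X \<omega> \<le> \<tau> \<and> W \<omega>}"
    and [measurable]: "X \<in> borel_measurable M" "Measurable.pred M W"
    and a: "0 \<le> a" "a \<le> \<tau>" and \<tau>: "0 < \<tau>" "\<tau> \<le> 1"
  shows "prob {\<omega> \<in> space M. X \<omega> \<le> a \<and> W \<omega>} \<le> a / \<tau> * prob {\<omega> \<in> space M. X \<omega> \<le> \<tau> \<and> W \<omega>}"
proof -
  define p where "p c = prob {\<omega> \<in> space M. X \<omega> \<le> c \<and> W \<omega>}" for c
  have p_mono: "p c \<le> p d" if "c \<le> d" for c d
    unfolding p_def using that by (intro finite_measure_mono) auto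
  have scaled: "p c \<le> c / s * p s" if "0 < c" "c < s" "s < 1" for c s
  proof -
    have "{\<omega> \<in> space M. X \<omega> \<le> c \<and> W \<omega>} = {\<omega> \<in> space M. X \<omega> / s \<le> c / s \<and> X \<omega> \<le> s \<and> W \<omega>}"
      using that by (auto simp: divide_le_cancel)
    then show ?thesis
      unfolding p_def using superuniform[of "c / s" s] that by simp
  qed
  \<comment> \<open>The hypothesis covers only levels in (0,1); the cases a = 0 and \<tau> = 1 follow by approximation.\<close>
  consider "a = 0" | "0 < a" "a < \<tau>" | "a = \<tau>" using a by linarith
  then have "p a \<le> a / \<tau> * p \<tau>"
  proof cases
    case 1
    have "p 0 \<le> 0"
    proof (rule dense_ge_bounded[of 0 1])
      fix w :: real assume w: "0 < w" "w < 1"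
      have "p 0 \<le> prob {\<omega> \<in> space M. X \<omega> / (1/2) \<le> w \<and> X \<omega> \<le> 1/2 \<and> W \<omega>}"
        unfolding p_def using w by (intro finite_measure_mono) auto
      also have "\<dots> \<le> w * p (1/2)" unfolding p_def using w by (intro superuniform) auto
      also have "\<dots> \<le> w" using w by (simp add: p_def mult_left_le)
      finally show "p 0 \<le> w" .
    qed simp
    with 1 show ?thesis by (simp add: p_def)
  next
    case 2
    have bound: "p a * s \<le> a * p \<tau>" if "a < s" "s < \<tau>" for s
    proof -
      have "p a \<le> a / s * p s" using scaled[of a s] 2 that \<tau> by simp
      also have "\<dots> \<le> a / s * p \<tau>" using p_mono[of s \<tau>] 2 that by (intro mult_left_mono) auto
      finally have "p a \<le> a / s * p \<tau>" .
      then show ?thesis using 2 that by (simp add: field_simps)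
    qed
    show ?thesis
    proof (cases "p a = 0")
      case False
      then have pos: "0 < p a" by (simp add: p_def zero_less_measure_iff)
      have "\<tau> \<le> a * p \<tau> / p a"
      proof (rule dense_le_bounded[of a])
        fix s assume "a < s" "s < \<tau>"
        then show "s \<le> a * p \<tau> / p a"
          using bound[of s] by (simp add: pos_le_divide_eq[OF pos] mult.commute)
      qed (use 2 in simp)
      then show ?thesis using pos \<tau> by (simp add: field_simps)
    qed (use a \<tau> in \<open>simp add: p_def\<close>)
  qed (use \<tau> in simp)
  then show ?thesis by (simp add: p_def)
qed

lemma (in finite_measure) integrable_fun_finite_valued:
  fixes W :: "'a \<Rightarrow> 'b::countable" and g :: "'b \<Rightarrow> real"
  assumes "W \<in> M \<rightarrow>\<^sub>M count_space UNIV" "finite Ws" "\<And>\<omega>. \<omega> \<in> space M \<Longrightarrow> W \<omega> \<in> Ws"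
  shows "integrable M (\<lambda>\<omega>. g (W \<omega>))"
proof (rule integrable_const_bound)
  show "AE \<omega> in M. norm (g (W \<omega>)) \<le> (\<Sum>w\<in>Ws. \<bar>g w\<bar>)"
    using assms(2,3) by (intro AE_I2) (auto intro: member_le_sum)
  show "(\<lambda>\<omega>. g (W \<omega>)) \<in> borel_measurable M"
    using assms(1) by measurable
qed

lemma (in finite_measure) integrable_indicator_finite_valued:
  fixes W :: "'a \<Rightarrow> 'b::countable" and X :: "'a \<Rightarrow> real" and g c :: "'b \<Rightarrow> real"
  assumes [measurable]: "W \<in> M \<rightarrow>\<^sub>M count_space UNIV" "X \<in> borel_measurable M"
    and "finite Ws" "\<And>\<omega>. \<omega> \<in> space M \<Longrightarrow> W \<omega> \<in> Ws"
  shows "integrable M (\<lambda>\<omega>. if X \<omega> \<le> c (W \<omega>) then g (W \<omega>) else 0)"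
  by (rule Bochner_Integration.integrable_bound[OF integrable_fun_finite_valued[OF assms(1,3,4)]])
    (auto intro!: AE_I2)

lemma (in finite_measure) integral_indicator_finite_valued:
  fixes W :: "'a \<Rightarrow> 'b::countable" and X :: "'a \<Rightarrow> real" and g c :: "'b \<Rightarrow> real"
  assumes [measurable]: "W \<in> M \<rightarrow>\<^sub>M count_space UNIV" "X \<in> borel_measurable M"
    and Ws: "finite Ws" "\<And>\<omega>. \<omega> \<in> space M \<Longrightarrow> W \<omega> \<in> Ws"
  shows "(\<integral>\<omega>. (if X \<omega> \<le> c (W \<omega>) then g (W \<omega>) else 0) \<partial>M)
    = (\<Sum>w\<in>Ws. g w * measure M {\<omega> \<in> space M. X \<omega> \<le> c w \<and> W \<omega> = w})"
proof -
  let ?E = "\<lambda>w. {\<omega> \<in> space M. X \<omega> \<le> c w \<and> W \<omega> = w}"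
  have [measurable]: "?E w \<in> sets M" for w by measurable
  have "(\<integral>\<omega>. (if X \<omega> \<le> c (W \<omega>) then g (W \<omega>) else 0) \<partial>M)
      = (\<integral>\<omega>. (\<Sum>w\<in>Ws. g w * indicator (?E w) \<omega>) \<partial>M)"
  proof (rule Bochner_Integration.integral_cong[OF refl])
    fix \<omega> assume \<omega>: "\<omega> \<in> space M"
    have "(\<Sum>w\<in>Ws. g w * indicator (?E w) \<omega>)
        = (\<Sum>w\<in>Ws. if w = W \<omega> then (if X \<omega> \<le> c (W \<omega>) then g (W \<omega>) else 0) else 0)"
      using \<omega> by (intro sum.cong) (auto simp: indicator_def)
    then show "(if X \<omega> \<le> c (W \<omega>) then g (W \<omega>) else 0) = (\<Sum>w\<in>Ws. g w * indicator (?E w) \<omega>)"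
      using Ws \<omega> by (simp add: sum.delta')
  qed
  also have "\<dots> = (\<Sum>w\<in>Ws. g w * measure M (?E w))"
    by (subst Bochner_Integration.integral_sum)
      (auto intro!: integrable_mult_right integrable_real_indicator simp: Int_absorb2 sets.sets_into_space less_top[symmetric])
  finally show ?thesis .
qed

definition fdp_denominator :: "history \<Rightarrow> real" where
  "fdp_denominator h = max (real (card (rejections h))) 1"

locale dlord = prob_space M for M :: "'a measure" +
  fixes P :: "nat \<Rightarrow> 'a \<Rightarrow> real" and H0 :: "nat set" and A T :: "history \<Rightarrow> real"
  assumes measurable_P [measurable]: "\<And>j. P j \<in> borel_measurable M"
    and levels: "\<And>\<omega> j. \<omega> \<in> space M \<Longrightarrow> 1 \<le> j \<Longrightarrow>
        0 \<le> alpha_seq A T (\<lambda>i. P i \<omega>) j \<and> alpha_seq A T (\<lambda>i. P i \<omega>) j \<le> tau_seq A T (\<lambda>i. P i \<omega>) j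
        \<and> 0 < tau_seq A T (\<lambda>i. P i \<omega>) j \<and> tau_seq A T (\<lambda>i. P i \<omega>) j \<le> 1"
    and cond_unif: "\<And>t h x \<tau>. t \<in> H0 \<Longrightarrow> 1 \<le> t \<Longrightarrow> length h = t - 1 \<Longrightarrow>
        0 < x \<Longrightarrow> x < 1 \<Longrightarrow> 0 < \<tau> \<Longrightarrow> \<tau> < 1 \<Longrightarrow>
        prob {\<omega> \<in> space M. P t \<omega> / \<tau> \<le> x \<and> P t \<omega> \<le> \<tau> \<and> hist A T (\<lambda>i. P i \<omega>) (t - 1) = h}
        \<le> x * prob {\<omega> \<in> space M. P t \<omega> \<le> \<tau> \<and> hist A T (\<lambda>i. P i \<omega>) (t - 1) = h}"
begin

abbreviation H :: "'a \<Rightarrow> nat \<Rightarrow> history" where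
  "H \<omega> n \<equiv> hist A T (\<lambda>i. P i \<omega>) n"

lemma measurable_H [measurable]: "(\<lambda>\<omega>. H \<omega> n) \<in> M \<rightarrow>\<^sub>M count_space UNIV"
  by (rule hist_measurable) simp

lemma levels_H:
  assumes "\<omega> \<in> space M" "1 \<le> j"
  shows "0 \<le> A (H \<omega> (j - 1))" "A (H \<omega> (j - 1)) \<le> T (H \<omega> (j - 1))"
    "0 < T (H \<omega> (j - 1))" "T (H \<omega> (j - 1)) \<le> 1"
  using levels[OF assms] by (auto simp: alpha_seq_def tau_seq_def)

lemma null_rejection_prob_le:
  assumes "j \<in> H0" "1 \<le> j"
  shows "prob {\<omega> \<in> space M. P j \<omega> \<le> A h \<and> H \<omega> (j - 1) = h}
    \<le> A h / T h * prob {\<omega> \<in> space M. P j \<omega> \<le> T h \<and> H \<omega> (j - 1) = h}"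
proof (cases "\<exists>\<omega> \<in> space M. H \<omega> (j - 1) = h")
  case True
  then obtain \<omega> where \<omega>: "\<omega> \<in> space M" "H \<omega> (j - 1) = h" by blast
  show ?thesis
  proof (rule prob_le_scaled_if_cond_superuniform)
    show "Measurable.pred M (\<lambda>\<omega>. H \<omega> (j - 1) = h)" by measurable
  qed (use cond_unif[OF assms] \<omega> levels_H[OF \<omega>(1) assms(2)] in auto)
next
  case False
  then have "{\<omega> \<in> space M. P j \<omega> \<le> c \<and> H \<omega> (j - 1) = h} = {}" for c
    by auto
  then show ?thesis by (simp only:) simp
qed

definition fd_estimate :: "nat \<Rightarrow> 'a \<Rightarrow> real" where
  "fd_estimate j \<omega> = (if P j \<omega> \<le> T (H \<omega> (j - 1)) then A (H \<omega> (j - 1)) / T (H \<omega> (j - 1)) else 0)"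

lemma fd_estimate_nonneg: "\<omega> \<in> space M \<Longrightarrow> 1 \<le> j \<Longrightarrow> 0 \<le> fd_estimate j \<omega>"
  using levels_H[of \<omega> j] by (simp add: fd_estimate_def)

lemma integrable_fd_estimate: "integrable M (fd_estimate j)"
  unfolding fd_estimate_def[abs_def]
  by (rule integrable_indicator_finite_valued[OF measurable_H measurable_P finite_histories]) simp

lemma fdp_hat_eq: "fdp_hat A T (\<lambda>i. P i \<omega>) t = (\<Sum>j\<in>{1..t}. fd_estimate j \<omega>) / fdp_denominator (H \<omega> t)"
  unfolding fdp_hat_def fdp_denominator_def rej_set_eq_rejections
  by (intro arg_cong2[where f="(/)"] sum.cong) (auto simp: fd_estimate_def alpha_seq_def tau_seq_def)

lemma fdp_denominator_ge_1: "1 \<le> fdp_denominator h"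
  by (simp add: fdp_denominator_def)

lemma null_rejection_expectation_le:
  assumes "j \<in> H0" "1 \<le> j"
  shows "expectation (\<lambda>\<omega>. if P j \<omega> \<le> A (H \<omega> (j - 1)) then 1 else 0 :: real) \<le> expectation (fd_estimate j)"
proof -
  have "expectation (\<lambda>\<omega>. if P j \<omega> \<le> A (H \<omega> (j - 1)) then 1 else 0)
      = (\<Sum>h\<in>{h. length h = j - 1}. prob {\<omega> \<in> space M. P j \<omega> \<le> A h \<and> H \<omega> (j - 1) = h})"
    using integral_indicator_finite_valued[OF measurable_H measurable_P finite_histories, where c=A and g="\<lambda>_. 1"]
    by simp
  also have "\<dots> \<le> (\<Sum>h\<in>{h. length h = j - 1}.
      A h / T h * prob {\<omega> \<in> space M. P j \<omega> \<le> T h \<and> H \<omega> (j - 1) = h})"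
    by (intro sum_mono null_rejection_prob_le assms)
  also have "\<dots> = expectation (fd_estimate j)"
    unfolding fd_estimate_def[abs_def]
    by (rule integral_indicator_finite_valued[OF measurable_H measurable_P finite_histories, symmetric]) simp
  finally show ?thesis .
qed

lemma max_card_rej_set_eq_fdp_denominator: "max (real (card (rej_set A T (\<lambda>i. P i \<omega>) t))) 1 = fdp_denominator (H \<omega> t)"
  by (simp add: fdp_denominator_def rej_set_eq_rejections)

lemma integrable_fdp_denominator: "integrable M (\<lambda>\<omega>. fdp_denominator (H \<omega> t))"
  by (rule integrable_fun_finite_valued[OF measurable_H finite_histories]) simp

lemma sum_fd_estimate_le:
  assumes "\<omega> \<in> space M" "fdp_hat A T (\<lambda>i. P i \<omega>) t \<le> \<alpha>"
  shows "(\<Sum>j\<in>{1..t}. fd_estimate j \<omega>) \<le> \<alpha> * fdp_denominator (H \<omega> t)"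
  using assms(2) fdp_denominator_ge_1[of "H \<omega> t"] by (simp add: fdp_hat_eq pos_divide_le_eq)

lemma card_null_rej_set_eq_sum:
  "real (card (H0 \<inter> rej_set A T (\<lambda>i. P i \<omega>) t))
    = (\<Sum>j\<in>H0 \<inter> {1..t}. if P j \<omega> \<le> A (H \<omega> (j - 1)) then 1 else 0)"
proof -
  have "H0 \<inter> rej_set A T (\<lambda>i. P i \<omega>) t = {j \<in> H0 \<inter> {1..t}. P j \<omega> \<le> A (H \<omega> (j - 1))}"
    unfolding rej_set_def alpha_seq_def by auto
  then show ?thesis by (simp add: sum.inter_filter[symmetric])
qed

lemma integrable_null_rejection:
  "integrable M (\<lambda>\<omega>. if P j \<omega> \<le> A (H \<omega> (j - 1)) then 1 else 0 :: real)"
  using integrable_indicator_finite_valued[OF measurable_H[of "j - 1"] measurable_P[of j]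
      finite_histories[of "j - 1"], where c=A and g="\<lambda>_. 1"] by simp

lemma mfdr_le:
  assumes fdp_bound: "\<And>\<omega>. \<omega> \<in> space M \<Longrightarrow> fdp_hat A T (\<lambda>i. P i \<omega>) t \<le> \<alpha>"
  shows "expectation (\<lambda>\<omega>. real (card (H0 \<inter> rej_set A T (\<lambda>i. P i \<omega>) t)))
    / expectation (\<lambda>\<omega>. max (real (card (rej_set A T (\<lambda>i. P i \<omega>) t))) 1) \<le> \<alpha>"
proof -
  have "expectation (\<lambda>\<omega>. real (card (H0 \<inter> rej_set A T (\<lambda>i. P i \<omega>) t)))
      = (\<Sum>j\<in>H0 \<inter> {1..t}. expectation (\<lambda>\<omega>. if P j \<omega> \<le> A (H \<omega> (j - 1)) then 1 else 0))"
    unfolding card_null_rej_set_eq_sum by (intro Bochner_Integration.integral_sum integrable_null_rejection)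
  also have "\<dots> \<le> (\<Sum>j\<in>H0 \<inter> {1..t}. expectation (fd_estimate j))"
    by (intro sum_mono null_rejection_expectation_le) auto
  also have "\<dots> \<le> (\<Sum>j\<in>{1..t}. expectation (fd_estimate j))"
    by (intro sum_mono2 integral_nonneg_AE AE_I2 fd_estimate_nonneg) auto
  also have "\<dots> = expectation (\<lambda>\<omega>. \<Sum>j\<in>{1..t}. fd_estimate j \<omega>)"
    by (intro Bochner_Integration.integral_sum[symmetric] integrable_fd_estimate)
  also have "\<dots> \<le> expectation (\<lambda>\<omega>. \<alpha> * fdp_denominator (H \<omega> t))"
    using integrable_fdp_denominator
    by (intro integral_mono Bochner_Integration.integrable_sum integrable_fd_estimate sum_fd_estimate_le
        fdp_bound) auto
  finally have "expectation (\<lambda>\<omega>. real (card (H0 \<inter> rej_set A T (\<lambda>i. P i \<omega>) t)))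
      \<le> \<alpha> * expectation (\<lambda>\<omega>. fdp_denominator (H \<omega> t))" by simp
  moreover have "expectation (\<lambda>_. 1) \<le> expectation (\<lambda>\<omega>. fdp_denominator (H \<omega> t))"
    by (intro integral_mono integrable_fdp_denominator fdp_denominator_ge_1) simp
  ultimately show ?thesis by (simp add: max_card_rej_set_eq_fdp_denominator divide_le_eq prob_space)
qed

end

locale dlord_indep = dlord +
  assumes indep: "indep_vars
      (\<lambda>k. PiM (case k of None \<Rightarrow> {j. 1 \<le> j \<and> j \<notin> H0} | Some j \<Rightarrow> {j}) (\<lambda>_. borel))
      (\<lambda>k \<omega>. restrict (\<lambda>j. P j \<omega>) (case k of None \<Rightarrow> {j. 1 \<le> j \<and> j \<notin> H0} | Some j \<Rightarrow> {j}))
      (insert None (Some ` {j \<in> H0. 1 \<le> j}))"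
    and mono_A: "mono_past A" and mono_T: "mono_past (\<lambda>h. 1 - T h)"
begin

text \<open>Since -1 lies below every level, P_forced j forces R_j = S_j = 1 whatever the past, and its
  history is a function of the p-values other than P_j.\<close>

definition P_forced :: "nat \<Rightarrow> 'a \<Rightarrow> nat \<Rightarrow> real" where
  "P_forced j \<omega> i = (if i = j then -1 else P i \<omega>)"

abbreviation H_forced :: "nat \<Rightarrow> 'a \<Rightarrow> nat \<Rightarrow> history" where
  "H_forced j \<omega> n \<equiv> hist A T (P_forced j \<omega>) n"

lemma prob_P_H_forced_indep:
  assumes j: "j \<in> H0" "1 \<le> j"
  shows "prob {\<omega> \<in> space M. P j \<omega> \<le> c \<and> H_forced j \<omega> n = v}
    = prob {\<omega> \<in> space M. P j \<omega> \<le> c} * prob {\<omega> \<in> space M. H_forced j \<omega> n = v}"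
proof -
  define S where "S k = (case k of None \<Rightarrow> {j. 1 \<le> j \<and> j \<notin> H0} | Some j \<Rightarrow> {j})" for k
  define I where "I = insert None (Some ` {j \<in> H0. 1 \<le> j})"
  define N where "N = (\<lambda>k. PiM (S k) (\<lambda>_::nat. borel :: real measure))"
  define X where "X k \<omega> = restrict (\<lambda>j. P j \<omega>) (S k)" for k \<omega>
  define K1 where "K1 = {Some j}"
  define K2 where "K2 = I - {Some j}"
  have "indep_var (PiM K1 N) (\<lambda>\<omega>. restrict (\<lambda>k. X k \<omega>) K1) (PiM K2 N) (\<lambda>\<omega>. restrict (\<lambda>k. X k \<omega>) K2)"
    using indep j unfolding S_def[abs_def] I_def N_def X_def[abs_def]
    by (intro indep_var_restrict) (auto simp: K1_def K2_def I_def)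
  moreover have coordinate: "(\<lambda>g. g k i) \<in> borel_measurable (PiM K N)" if "k \<in> K" "i \<in> S k" for K k i
  proof -
    have "(\<lambda>g. g k) \<in> PiM K N \<rightarrow>\<^sub>M PiM (S k) (\<lambda>_. borel)"
      using measurable_component_singleton[OF that(1), of N] by (simp add: N_def)
    then show ?thesis by (rule measurable_compose) (rule measurable_component_singleton[OF that(2)])
  qed
  then have "(\<lambda>g. g (Some j) j \<le> c) \<in> PiM K1 N \<rightarrow>\<^sub>M count_space UNIV"
    by (simp add: K1_def S_def)
  \<comment> \<open>Q rebuilds P_forced j from the blocks other than the j-th one.\<close>
  moreover define Q where "Q g i = (if i = j then -1 else if i \<in> H0 \<and> 1 \<le> i then g (Some i) i
      else if 1 \<le> i then g None i else 0)" for g :: "nat option \<Rightarrow> nat \<Rightarrow> real" and i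
  have "(\<lambda>g. Q g i) \<in> borel_measurable (PiM K2 N)" for i
    using j by (cases "i = j \<or> i = 0"; cases "i \<in> H0")
      (auto simp: Q_def K2_def I_def S_def intro!: coordinate)
  then have "(\<lambda>g. hist A T (Q g) n = v) \<in> PiM K2 N \<rightarrow>\<^sub>M count_space UNIV"
    using hist_measurable by measurable
  ultimately have "indep_var (count_space UNIV) ((\<lambda>g. g (Some j) j \<le> c) \<circ> (\<lambda>\<omega>. restrict (\<lambda>k. X k \<omega>) K1))
      (count_space UNIV) ((\<lambda>g. hist A T (Q g) n = v) \<circ> (\<lambda>\<omega>. restrict (\<lambda>k. X k \<omega>) K2))"
    by (rule indep_var_compose)
  moreover have "(\<lambda>g. g (Some j) j \<le> c) \<circ> (\<lambda>\<omega>. restrict (\<lambda>k. X k \<omega>) K1) = (\<lambda>\<omega>. P j \<omega> \<le> c)"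
    by (auto simp: K1_def X_def S_def)
  moreover have "(\<lambda>g. hist A T (Q g) n = v) \<circ> (\<lambda>\<omega>. restrict (\<lambda>k. X k \<omega>) K2) = (\<lambda>\<omega>. H_forced j \<omega> n = v)"
  proof -
    have "hist A T (Q (restrict (\<lambda>k. X k \<omega>) K2)) n = H_forced j \<omega> n" for \<omega>
      by (rule hist_cong) (auto simp: Q_def K2_def I_def X_def S_def P_forced_def)
    then show ?thesis by (simp add: comp_def)
  qed
  ultimately have "indep_var (count_space UNIV) (\<lambda>\<omega>. P j \<omega> \<le> c) (count_space UNIV) (\<lambda>\<omega>. H_forced j \<omega> n = v)"
    by simp
  from indep_varD[OF this, of "{True}" "{True}"] show ?thesis
    by (simp add: vimage_def Int_def conj_commute)
qed

lemma H_forced_before: "H_forced j \<omega> (j - 1) = H \<omega> (j - 1)"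
  by (rule hist_eq_before) (simp add: P_forced_def)

lemma take_H_forced: "j \<le> t \<Longrightarrow> take (j - 1) (H_forced j \<omega> t) = H \<omega> (j - 1)"
  using H_forced_before[of j \<omega>] by (simp add: take_hist)

lemma null_prob_le_scaled:
  assumes j: "j \<in> H0" "1 \<le> j" and pos: "0 < prob {\<omega> \<in> space M. H \<omega> (j - 1) = h}"
  shows "prob {\<omega> \<in> space M. P j \<omega> \<le> A h} \<le> A h / T h * prob {\<omega> \<in> space M. P j \<omega> \<le> T h}"
proof -
  have factor: "prob {\<omega> \<in> space M. P j \<omega> \<le> c \<and> H \<omega> (j - 1) = h}
      = prob {\<omega> \<in> space M. P j \<omega> \<le> c} * prob {\<omega> \<in> space M. H \<omega> (j - 1) = h}" for c
    using prob_P_H_forced_indep[OF j, of c "j - 1" h] H_forced_before[of j] by simp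
  show ?thesis
  proof (rule mult_right_le_imp_le[OF _ pos])
    show "prob {\<omega> \<in> space M. P j \<omega> \<le> A h} * prob {\<omega> \<in> space M. H \<omega> (j - 1) = h}
        \<le> A h / T h * prob {\<omega> \<in> space M. P j \<omega> \<le> T h} * prob {\<omega> \<in> space M. H \<omega> (j - 1) = h}"
      using null_rejection_prob_le[OF j, of h] unfolding factor by (simp only: mult.assoc)
  qed
qed

lemma measurable_H_forced [measurable]: "(\<lambda>\<omega>. H_forced j \<omega> n) \<in> M \<rightarrow>\<^sub>M count_space UNIV"
  by (rule hist_measurable) (simp add: P_forced_def)

lemma null_prob_times_forced_le:
  fixes v :: history
  assumes j: "j \<in> H0" "1 \<le> j" "j \<le> t"
  defines "h \<equiv> take (j - 1) v"
  shows "prob {\<omega> \<in> space M. P j \<omega> \<le> A h} * prob {\<omega> \<in> space M. H_forced j \<omega> t = v}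
    \<le> A h / T h * prob {\<omega> \<in> space M. P j \<omega> \<le> T h} * prob {\<omega> \<in> space M. H_forced j \<omega> t = v}"
proof (cases "prob {\<omega> \<in> space M. H_forced j \<omega> t = v} = 0")
  case False
  have "{\<omega> \<in> space M. H_forced j \<omega> t = v} \<subseteq> {\<omega> \<in> space M. H \<omega> (j - 1) = h}"
    using take_H_forced[OF j(3)] by (auto simp: h_def)
  moreover have "{\<omega> \<in> space M. H \<omega> (j - 1) = h} \<in> events" by measurable
  ultimately have "prob {\<omega> \<in> space M. H_forced j \<omega> t = v} \<le> prob {\<omega> \<in> space M. H \<omega> (j - 1) = h}"
    by (rule finite_measure_mono)
  with False have "0 < prob {\<omega> \<in> space M. H \<omega> (j - 1) = h}"
    using measure_nonneg[of M "{\<omega> \<in> space M. H_forced j \<omega> t = v}"] by linarith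
  from null_prob_le_scaled[OF j(1,2) this] show ?thesis
    by (rule mult_right_mono) simp
qed simp

lemma forced_expectation_le:
  assumes j: "j \<in> H0" "1 \<le> j" "j \<le> t"
  shows "expectation (\<lambda>\<omega>. if P j \<omega> \<le> A (take (j - 1) (H_forced j \<omega> t))
      then 1 / fdp_denominator (H_forced j \<omega> t) else 0)
    \<le> expectation (\<lambda>\<omega>. if P j \<omega> \<le> T (take (j - 1) (H_forced j \<omega> t))
      then A (take (j - 1) (H_forced j \<omega> t)) / T (take (j - 1) (H_forced j \<omega> t))
        / fdp_denominator (H_forced j \<omega> t) else 0)"
    (is "_ \<le> expectation ?R")
proof -
  let ?V = "\<lambda>\<omega>. H_forced j \<omega> t" and ?h = "\<lambda>v :: history. take (j - 1) v"
  let ?pV = "\<lambda>v. prob {\<omega> \<in> space M. ?V \<omega> = v}"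
  have factor: "prob {\<omega> \<in> space M. P j \<omega> \<le> c \<and> ?V \<omega> = v} = prob {\<omega> \<in> space M. P j \<omega> \<le> c} * ?pV v"
    for c v by (rule prob_P_H_forced_indep[OF j(1,2)])
  note decompose = integral_indicator_finite_valued[OF measurable_H_forced measurable_P finite_histories]
  have "expectation (\<lambda>\<omega>. if P j \<omega> \<le> A (?h (?V \<omega>)) then 1 / fdp_denominator (?V \<omega>) else 0)
      = (\<Sum>v\<in>{v. length v = t}. 1 / fdp_denominator v * prob {\<omega> \<in> space M. P j \<omega> \<le> A (?h v) \<and> ?V \<omega> = v})"
    by (rule decompose) simp
  also have "\<dots> = (\<Sum>v\<in>{v. length v = t}. 1 / fdp_denominator v * (prob {\<omega> \<in> space M. P j \<omega> \<le> A (?h v)} * ?pV v))"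
    by (simp only: factor)
  also have "\<dots> \<le> (\<Sum>v\<in>{v. length v = t}. A (?h v) / T (?h v) / fdp_denominator v
      * (prob {\<omega> \<in> space M. P j \<omega> \<le> T (?h v)} * ?pV v))"
  proof (rule sum_mono)
    fix v :: history
    have "0 \<le> 1 / fdp_denominator v" using fdp_denominator_ge_1[of v] by simp
    from mult_left_mono[OF null_prob_times_forced_le[OF j, of v] this]
    show "1 / fdp_denominator v * (prob {\<omega> \<in> space M. P j \<omega> \<le> A (?h v)} * ?pV v)
        \<le> A (?h v) / T (?h v) / fdp_denominator v * (prob {\<omega> \<in> space M. P j \<omega> \<le> T (?h v)} * ?pV v)"
      by (simp add: ac_simps)
  qed
  also have "\<dots> = (\<Sum>v\<in>{v. length v = t}. A (?h v) / T (?h v) / fdp_denominator v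
      * prob {\<omega> \<in> space M. P j \<omega> \<le> T (?h v) \<and> ?V \<omega> = v})"
    by (simp only: factor)
  also have "\<dots> = expectation ?R"
    by (rule decompose[symmetric]) simp
  finally show ?thesis .
qed

lemma null_rejection_eq_forced:
  assumes "\<omega> \<in> space M" "1 \<le> j" "j \<le> t"
  shows "(if P j \<omega> \<le> A (H \<omega> (j - 1)) then 1 else 0) / fdp_denominator (H \<omega> t)
    = (if P j \<omega> \<le> A (take (j - 1) (H_forced j \<omega> t)) then 1 / fdp_denominator (H_forced j \<omega> t) else 0)"
proof (cases "P j \<omega> \<le> A (H \<omega> (j - 1))")
  case True
  have "H_forced j \<omega> t = H \<omega> t"
    using True levels_H[OF assms(1,2)] by (intro hist_eq_if_rejected_and_selected) (auto simp: P_forced_def)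
  with True show ?thesis unfolding take_H_forced[OF assms(3)] by simp
qed (unfold take_H_forced[OF assms(3)], simp)

lemma forced_fd_estimate_le:
  assumes "\<omega> \<in> space M" "1 \<le> j" "j \<le> t"
  shows "(if P j \<omega> \<le> T (take (j - 1) (H_forced j \<omega> t))
      then A (take (j - 1) (H_forced j \<omega> t)) / T (take (j - 1) (H_forced j \<omega> t))
        / fdp_denominator (H_forced j \<omega> t) else 0)
    \<le> fd_estimate j \<omega> / fdp_denominator (H \<omega> t)"
proof (cases "P j \<omega> \<le> T (H \<omega> (j - 1))")
  case True
  note lv = levels_H[OF assms(1,2)]
  have "hist_le (H \<omega> t) (H_forced j \<omega> t)"
    using True lv by (intro hist_le_if_rejected[OF mono_A mono_T]) (auto simp: P_forced_def)
  then have "fdp_denominator (H \<omega> t) \<le> fdp_denominator (H_forced j \<omega> t)"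
    unfolding fdp_denominator_def
    by (intro max.mono of_nat_mono card_mono rejections_mono) (auto simp: rejections_def)
  moreover have "0 \<le> A (H \<omega> (j - 1)) / T (H \<omega> (j - 1))" using lv by simp
  moreover have "0 < fdp_denominator (H_forced j \<omega> t) * fdp_denominator (H \<omega> t)"
    using fdp_denominator_ge_1 by (simp add: less_le_trans[OF zero_less_one])
  ultimately have "A (H \<omega> (j - 1)) / T (H \<omega> (j - 1)) / fdp_denominator (H_forced j \<omega> t)
      \<le> A (H \<omega> (j - 1)) / T (H \<omega> (j - 1)) / fdp_denominator (H \<omega> t)"
    by (rule divide_left_mono)
  then show ?thesis
    unfolding take_H_forced[OF assms(3)] using True by (simp add: fd_estimate_def)
qed (unfold take_H_forced[OF assms(3)], simp add: fd_estimate_def)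

lemma integrable_divide_fdp_denominator:
  assumes "integrable M f"
  shows "integrable M (\<lambda>\<omega>. f \<omega> / fdp_denominator (H \<omega> t))"
proof (rule Bochner_Integration.integrable_bound[OF assms])
  show "(\<lambda>\<omega>. f \<omega> / fdp_denominator (H \<omega> t)) \<in> borel_measurable M"
    using borel_measurable_integrable[OF assms] by measurable
  show "AE \<omega> in M. norm (f \<omega> / fdp_denominator (H \<omega> t)) \<le> norm (f \<omega>)"
  proof (intro AE_I2)
    fix \<omega>
    have "1 \<le> fdp_denominator (H \<omega> t)" by (rule fdp_denominator_ge_1)
    then show "norm (f \<omega> / fdp_denominator (H \<omega> t)) \<le> norm (f \<omega>)"
      by (simp add: divide_le_eq abs_mult mult_le_cancel_left1)
  qed
qed

lemma null_fdr_term_le: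
  assumes j: "j \<in> H0" "1 \<le> j" "j \<le> t"
  shows "expectation (\<lambda>\<omega>. (if P j \<omega> \<le> A (H \<omega> (j - 1)) then 1 else 0) / fdp_denominator (H \<omega> t))
    \<le> expectation (\<lambda>\<omega>. fd_estimate j \<omega> / fdp_denominator (H \<omega> t))"
proof -
  have "expectation (\<lambda>\<omega>. (if P j \<omega> \<le> A (H \<omega> (j - 1)) then 1 else 0) / fdp_denominator (H \<omega> t))
      = expectation (\<lambda>\<omega>. if P j \<omega> \<le> A (take (j - 1) (H_forced j \<omega> t))
          then 1 / fdp_denominator (H_forced j \<omega> t) else 0)"
    using j by (intro Bochner_Integration.integral_cong null_rejection_eq_forced) auto
  also have "\<dots> \<le> expectation (\<lambda>\<omega>. if P j \<omega> \<le> T (take (j - 1) (H_forced j \<omega> t))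
      then A (take (j - 1) (H_forced j \<omega> t)) / T (take (j - 1) (H_forced j \<omega> t))
        / fdp_denominator (H_forced j \<omega> t) else 0)"
    by (rule forced_expectation_le[OF j])
  also have "\<dots> \<le> expectation (\<lambda>\<omega>. fd_estimate j \<omega> / fdp_denominator (H \<omega> t))"
    using j
    by (intro integral_mono integrable_divide_fdp_denominator integrable_fd_estimate forced_fd_estimate_le
        integrable_indicator_finite_valued[OF measurable_H_forced measurable_P finite_histories]) auto
  finally show ?thesis .
qed

lemma fdr_le:
  assumes fdp_bound: "\<And>\<omega>. \<omega> \<in> space M \<Longrightarrow> fdp_hat A T (\<lambda>i. P i \<omega>) t \<le> \<alpha>"
  shows "expectation (\<lambda>\<omega>. real (card (H0 \<inter> rej_set A T (\<lambda>i. P i \<omega>) t))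
    / max (real (card (rej_set A T (\<lambda>i. P i \<omega>) t))) 1) \<le> \<alpha>"
proof -
  have "expectation (\<lambda>\<omega>. real (card (H0 \<inter> rej_set A T (\<lambda>i. P i \<omega>) t))
      / max (real (card (rej_set A T (\<lambda>i. P i \<omega>) t))) 1)
    = (\<Sum>j\<in>H0 \<inter> {1..t}.
        expectation (\<lambda>\<omega>. (if P j \<omega> \<le> A (H \<omega> (j - 1)) then 1 else 0) / fdp_denominator (H \<omega> t)))"
    unfolding card_null_rej_set_eq_sum max_card_rej_set_eq_fdp_denominator sum_divide_distrib
    by (intro Bochner_Integration.integral_sum integrable_divide_fdp_denominator integrable_null_rejection)
  also have "\<dots> \<le> (\<Sum>j\<in>H0 \<inter> {1..t}. expectation (\<lambda>\<omega>. fd_estimate j \<omega> / fdp_denominator (H \<omega> t)))"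
    by (intro sum_mono null_fdr_term_le) auto
  also have "\<dots> \<le> (\<Sum>j\<in>{1..t}. expectation (\<lambda>\<omega>. fd_estimate j \<omega> / fdp_denominator (H \<omega> t)))"
    using fdp_denominator_ge_1
    by (intro sum_mono2 integral_nonneg_AE AE_I2 divide_nonneg_nonneg fd_estimate_nonneg)
      (auto intro: order_trans[OF zero_le_one])
  also have "\<dots> = expectation (\<lambda>\<omega>. fdp_hat A T (\<lambda>i. P i \<omega>) t)"
    unfolding fdp_hat_eq sum_divide_distrib
    by (intro Bochner_Integration.integral_sum[symmetric] integrable_divide_fdp_denominator
        integrable_fd_estimate)
  also have "\<dots> \<le> expectation (\<lambda>_. \<alpha>)"
  proof (rule integral_mono)
    show "integrable M (\<lambda>\<omega>. fdp_hat A T (\<lambda>i. P i \<omega>) t)"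
      unfolding fdp_hat_eq sum_divide_distrib
      by (intro Bochner_Integration.integrable_sum integrable_divide_fdp_denominator integrable_fd_estimate)
  qed (use fdp_bound in auto)
  finally show ?thesis by (simp add: prob_space)
qed

end

theorem theorem3:
  fixes M :: "'a measure" and P :: "nat \<Rightarrow> 'a \<Rightarrow> real" and H0 :: "nat set"
    and A T :: "history \<Rightarrow> real" and \<alpha> :: real
  assumes prob: "prob_space M"
    and meas: "\<And>j. P j \<in> borel_measurable M"
    and alpha_range: "0 < \<alpha>" "\<alpha> < 1"
    and levels: "\<And>\<omega> j. \<omega> \<in> space M \<Longrightarrow> 1 \<le> j \<Longrightarrow>
        0 \<le> alpha_seq A T (\<lambda>i. P i \<omega>) j \<and> alpha_seq A T (\<lambda>i. P i \<omega>) j \<le> tau_seq A T (\<lambda>i. P i \<omega>) j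
        \<and> 0 < tau_seq A T (\<lambda>i. P i \<omega>) j \<and> tau_seq A T (\<lambda>i. P i \<omega>) j \<le> 1"
    and cond_unif: "\<And>t h x \<tau>. t \<in> H0 \<Longrightarrow> 1 \<le> t \<Longrightarrow> length h = t - 1 \<Longrightarrow>
        0 < x \<Longrightarrow> x < 1 \<Longrightarrow> 0 < \<tau> \<Longrightarrow> \<tau> < 1 \<Longrightarrow>
        measure M {\<omega> \<in> space M. P t \<omega> / \<tau> \<le> x \<and> P t \<omega> \<le> \<tau> \<and> hist A T (\<lambda>i. P i \<omega>) (t - 1) = h}
        \<le> x * measure M {\<omega> \<in> space M. P t \<omega> \<le> \<tau> \<and> hist A T (\<lambda>i. P i \<omega>) (t - 1) = h}"
    and fdp_bound: "\<And>\<omega> t. \<omega> \<in> space M \<Longrightarrow> fdp_hat A T (\<lambda>i. P i \<omega>) t \<le> \<alpha>"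
  shows "(\<forall>t. prob_space.expectation M (\<lambda>\<omega>. real (card (H0 \<inter> rej_set A T (\<lambda>i. P i \<omega>) t)))
              / prob_space.expectation M (\<lambda>\<omega>. max (real (card (rej_set A T (\<lambda>i. P i \<omega>) t))) 1) \<le> \<alpha>)
    \<and> ((prob_space.indep_vars M
            (\<lambda>k. PiM (case k of None \<Rightarrow> {j. 1 \<le> j \<and> j \<notin> H0} | Some j \<Rightarrow> {j}) (\<lambda>_. borel))
            (\<lambda>k \<omega>. restrict (\<lambda>j. P j \<omega>) (case k of None \<Rightarrow> {j. 1 \<le> j \<and> j \<notin> H0} | Some j \<Rightarrow> {j}))
            (insert None (Some ` {j \<in> H0. 1 \<le> j}))
        \<and> mono_past A \<and> mono_past (\<lambda>h. 1 - T h))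
       \<longrightarrow> (\<forall>t. prob_space.expectation M
              (\<lambda>\<omega>. real (card (H0 \<inter> rej_set A T (\<lambda>i. P i \<omega>) t))
                    / max (real (card (rej_set A T (\<lambda>i. P i \<omega>) t))) 1) \<le> \<alpha>))"
proof -
  interpret dlord M P H0 A T
    by (intro dlord.intro dlord_axioms.intro prob meas levels cond_unif) simp_all
  show ?thesis
  proof (intro conjI allI impI)
    fix t
    show "expectation (\<lambda>\<omega>. real (card (H0 \<inter> rej_set A T (\<lambda>i. P i \<omega>) t)))
        / expectation (\<lambda>\<omega>. max (real (card (rej_set A T (\<lambda>i. P i \<omega>) t))) 1) \<le> \<alpha>"
      by (rule mfdr_le) (rule fdp_bound)
  next
    fix t
    assume "indep_vars
        (\<lambda>k. PiM (case k of None \<Rightarrow> {j. 1 \<le> j \<and> j \<notin> H0} | Some j \<Rightarrow> {j}) (\<lambda>_. borel))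
        (\<lambda>k \<omega>. restrict (\<lambda>j. P j \<omega>) (case k of None \<Rightarrow> {j. 1 \<le> j \<and> j \<notin> H0} | Some j \<Rightarrow> {j}))
        (insert None (Some ` {j \<in> H0. 1 \<le> j}))
      \<and> mono_past A \<and> mono_past (\<lambda>h. 1 - T h)"
    then interpret dlord_indep M P H0 A T
      by unfold_locales auto
    show "expectation (\<lambda>\<omega>. real (card (H0 \<inter> rej_set A T (\<lambda>i. P i \<omega>) t))
        / max (real (card (rej_set A T (\<lambda>i. P i \<omega>) t))) 1) \<le> \<alpha>"
      by (rule fdr_le) (rule fdp_bound)
  qed
qed

end
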